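(* A general ring $I$ is strongly $\pi$-regular if and only if $I$ is quasipolar and $QN(I)\subseteq\mathrm{Nil}(I)$.
   Context: A general ring is an associative ring not necessarily having an identity; $\mathrm{Nil}(I)$ is the set of nilpotent elements of $I$. For $p,q\in I$, $p*q=p+q-pq$; $Q(I)=\{q\in I\mid p*q=0=q*p \text{ for some } p\in I\}$; $\mathrm{comm}(a)=\{x\in I\mid xa=ax\}$, $\mathrm{comm}^2(a)=\{x\in I\mid xy=yx\text{ for all }y\in\mathrm{comm}(a)\}$; $QN(I)=\{q\in I\mid qx\in Q(I)\text{ for every }x\in\mathrm{comm}(q)\}$. An element $a\in I$ is quasipolar in $I$ if there is an idempotent $p=p^2\in\mathrm{comm}^2(a)$ with $a+p\in Q(I)$ and $a-ap\in QN(I)$; $I$ is quasipolar if every element is. An element $a$ is strongly $\pi$-regular if there exist $n\in\mathbb{N}$ and $x\in I$ with $xa=ax$ and $a^n=a^{n+1}x$; $I$ is strongly $\pi$-regular if every element is. *)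

theory Defs
  imports Main
begin

(* A general ring (associative, not necessarily unital) is modelled by the
   type class ring; the ring I is the whole carrier UNIV of the type. *)

text \<open>Positive powers in a ring without identity: gpow a n = a^n for n >= 1
  (the value at n = 0 is a dummy and is never used).\<close>
fun gpow :: "'a::ring \<Rightarrow> nat \<Rightarrow> 'a" where
  "gpow a 0 = 0"
| "gpow a (Suc 0) = a"
| "gpow a (Suc (Suc n)) = a * gpow a (Suc n)"

definition nil_set :: "'a::ring set" where
  "nil_set = {a. \<exists>n\<ge>1. gpow a n = 0}"

definition circ :: "'a::ring \<Rightarrow> 'a \<Rightarrow> 'a" where
  "circ p q = p + q - p * q"

definition Qset :: "'a::ring set" where
  "Qset = {q. \<exists>p. circ p q = 0 \<and> circ q p = 0}"

definition comm :: "'a::ring \<Rightarrow> 'a set" where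
  "comm a = {x. x * a = a * x}"

definition comm2 :: "'a::ring \<Rightarrow> 'a set" where
  "comm2 a = {x. \<forall>y\<in>comm a. x * y = y * x}"

definition QN :: "'a::ring set" where
  "QN = {q. \<forall>x\<in>comm q. q * x \<in> Qset}"

definition quasipolar :: "'a::ring \<Rightarrow> bool" where
  "quasipolar a \<longleftrightarrow> (\<exists>p. p * p = p \<and> p \<in> comm2 a \<and> a + p \<in> Qset \<and> a - a * p \<in> QN)"

definition strongly_pi_regular :: "'a::ring \<Rightarrow> bool" where
  "strongly_pi_regular a \<longleftrightarrow>
     (\<exists>n\<ge>1. \<exists>x. x * a = a * x \<and> gpow a n = gpow a (Suc n) * x)"

end

theory Submission
  imports Defs
begin

text \<open>If \<open>a\<^sup>n = a\<^sup>n\<^sup>+\<^sup>1x\<close> with \<open>x\<close> commuting with \<open>a\<close>, then \<open>p = a\<^sup>nx\<^sup>n\<close> is an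
  idempotent in the double commutant of \<open>a\<close>, \<open>a\<close> is invertible in the corner \<open>pIp\<close> with
  inverse \<open>px\<close>, and \<open>a - ap\<close> is nilpotent. The quasi-inverse of \<open>ap + p\<close> is \<open>p + px\<close>, and
  \<open>a + p = (ap + p) \<circ> (a - ap)\<close> with nilpotent elements quasi-invertible, so \<open>a\<close> is
  quasipolar. Moreover, if \<open>q \<in> QN(I)\<close> satisfies \<open>q\<^sup>n = q\<^sup>n\<^sup>+\<^sup>1x\<close>, then \<open>q\<^sup>n\<close> is fixed by
  \<open>qx \<in> Q(I)\<close>, and multiplying \<open>qx \<circ> r = 0\<close> by \<open>q\<^sup>n\<close> gives \<open>q\<^sup>n = 0\<close>.
  Conversely, if \<open>a\<close> is quasipolar with nilpotent \<open>a - ap\<close>, say \<open>a\<^sup>mp = a\<^sup>m\<close>, the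
  quasi-inverse \<open>r\<close> of \<open>a + p\<close> commutes with \<open>a\<close> and \<open>p\<close>, and \<open>x = rp - p\<close> satisfies
  \<open>ax = p\<close>, whence \<open>a\<^sup>m = a\<^sup>m\<^sup>+\<^sup>1x\<close>.\<close>

lemma gpow_Suc_left: "n \<ge> 1 \<Longrightarrow> gpow a (Suc n) = a * gpow a n"
  by (cases n) auto

lemma gpow_Suc_right: "n \<ge> 1 \<Longrightarrow> gpow a (Suc n) = gpow a n * a"
proof (induction n rule: dec_induct)
  case (step k)
  then show ?case
    by (metis gpow_Suc_left le_SucI mult.assoc)
qed simp

lemma gpow_commute: "y * a = a * y \<Longrightarrow> y * gpow a n = gpow a n * y"
proof (induction a n rule: gpow.induct)
  case (3 a n)
  then show ?case
    by (metis gpow.simps(3) mult.assoc)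
qed auto

lemma gpow_mult_commute: "b * a = a * b \<Longrightarrow> gpow (a * b) n = gpow a n * gpow b n"
proof (induction "a * b" n rule: gpow.induct)
  case (3 n)
  have "b * gpow a (Suc n) = gpow a (Suc n) * b"
    using gpow_commute 3(2) by metis
  then have "a * b * (gpow a (Suc n) * gpow b (Suc n))
      = a * gpow a (Suc n) * (b * gpow b (Suc n))"
    by (metis mult.assoc)
  then show ?case
    using 3 by simp
qed auto

lemma mult_gpow_fixed:
  assumes bu: "b * u = b" and m: "m \<ge> 1"
  shows "b * gpow u m = b"
  using m
proof (induction m rule: dec_induct)
  case (step k)
  then show ?case
    using bu by (metis gpow_Suc_right mult.assoc)
qed (simp add: bu)

lemma gpow_diff_mult_idem:
  fixes a p :: "'a::ring"
  assumes pp: "p * p = p" and pa: "p * a = a * p" and n: "n \<ge> 1"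
  shows "gpow (a - a * p) n = gpow a n - gpow a n * p"
  using n
proof (induction n rule: dec_induct)
  case (step k)
  have c: "p * gpow a k = gpow a k * p"
    using gpow_commute pa by metis
  have "gpow (a - a * p) (Suc k) = (a - a * p) * (gpow a k - gpow a k * p)"
    using gpow_Suc_left[OF step.hyps(1), of "a - a * p"] step.IH by simp
  also have "\<dots> = a * gpow a k - a * gpow a k * p - a * (p * gpow a k) + a * (p * gpow a k) * p"
    by (simp add: algebra_simps)
  also have "\<dots> = a * gpow a k - a * gpow a k * p"
    using c pp by (simp add: mult.assoc)
  also have "\<dots> = gpow a (Suc k) - gpow a (Suc k) * p"
    using gpow_Suc_left[OF step.hyps(1), of a] by simp
  finally show ?case .
qed simp

lemma circ_assoc: "circ (circ x y) z = circ x (circ y (z::'a::ring))"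
  by (simp add: circ_def algebra_simps)

lemma circ_0 [simp]: "circ 0 x = x" "circ x 0 = x"
  by (simp_all add: circ_def)

lemma circ_eq_0_imp_mult: "circ s r = 0 \<Longrightarrow> s * r = s + r"
  unfolding circ_def by (simp add: algebra_simps)

lemma Qset_circ_closed:
  assumes "x \<in> Qset" "y \<in> Qset"
  shows "circ x y \<in> Qset"
proof -
  obtain x' where x: "circ x' x = 0" "circ x x' = 0"
    using assms(1) unfolding Qset_def by blast
  obtain y' where y: "circ y' y = 0" "circ y y' = 0"
    using assms(2) unfolding Qset_def by blast
  have "circ (circ x y) (circ y' x') = 0" "circ (circ y' x') (circ x y) = 0"
    by (metis circ_assoc circ_0 x y)+
  then show ?thesis
    unfolding Qset_def by blast
qed

lemma quasi_inverse_commute: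
  fixes r s y :: "'a::ring"
  assumes rs0: "circ r s = 0" and sr0: "circ s r = 0" and ys: "s * y = y * s"
  shows "r * y = y * r"
proof -
  have rs: "r * s = r + s" and sr: "s * r = s + r"
    using circ_eq_0_imp_mult rs0 sr0 by blast+
  \<comment> \<open>unitised: \<open>(1 - r)y = (1 - r)y(1 - s)(1 - r) = (1 - r)(1 - s)y(1 - r) = y(1 - r)\<close>\<close>
  have "y - r * y = y - r * y + (y - r * y) * (s * r - s - r)"
    using sr by simp
  also have "\<dots> = y - y * r + (r * s - r - s) * (y - y * r)"
  proof -
    have "r * (y * s) = r * (s * y)" "y * (s * r) = s * (y * r)"
      "r * (y * (s * r)) = r * (s * (y * r))"
      using ys by (metis mult.assoc)+
    then show ?thesis
      using ys by (simp add: algebra_simps)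
  qed
  also have "\<dots> = y - y * r"
    using rs by simp
  finally show ?thesis
    by simp
qed

fun geo_sum :: "'a::ring \<Rightarrow> nat \<Rightarrow> 'a" where
  "geo_sum z 0 = 0"
| "geo_sum z (Suc n) = geo_sum z n + gpow z (Suc n)"

lemma geo_sum_mult_left: "z * geo_sum z n = geo_sum z (Suc n) - z"
  by (induction n) (auto simp: distrib_left)

lemma geo_sum_mult_right: "geo_sum z n * z = geo_sum z (Suc n) - z"
  by (induction n) (auto simp: distrib_right gpow_Suc_right[of "Suc _", symmetric])

lemma nilpotent_in_Qset:
  assumes "m \<ge> 1" "gpow z m = 0"
  shows "z \<in> Qset"
proof -
  obtain j where j: "m = Suc j"
    using assms(1) by (cases m) auto
  \<comment> \<open>\<open>-(z + \<dots> + z\<^sup>j)\<close> is the quasi-inverse, since \<open>z\<^sup>j\<^sup>+\<^sup>1 = 0\<close>\<close>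
  have "geo_sum z (Suc j) = geo_sum z j"
    using assms(2) j by simp
  then have "circ (- geo_sum z j) z = 0 \<and> circ z (- geo_sum z j) = 0"
    unfolding circ_def using geo_sum_mult_left[of z j] geo_sum_mult_right[of z j]
    by (simp add: algebra_simps)
  then show ?thesis
    unfolding Qset_def by blast
qed

lemma nilpotent_in_QN:
  assumes n: "n \<ge> 1" and N: "gpow N n = 0"
  shows "N \<in> QN"
  unfolding QN_def comm_def
proof (intro CollectI ballI)
  fix y
  assume "y \<in> {x. x * N = N * x}"
  then have "gpow (N * y) n = gpow N n * gpow y n"
    using gpow_mult_commute by simp
  then have "gpow (N * y) n = 0"
    using N by simp
  then show "N * y \<in> Qset"
    using nilpotent_in_Qset n by blast
qed

lemma strongly_pi_regular_QN_imp_nil: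
  assumes "strongly_pi_regular q" and q: "q \<in> QN"
  shows "q \<in> nil_set"
proof -
  obtain n x where n: "n \<ge> 1" and xq: "x * q = q * x" and qx: "gpow q n = gpow q (Suc n) * x"
    using assms(1) unfolding strongly_pi_regular_def by blast
  have "q * x \<in> Qset"
    using q xq unfolding QN_def comm_def by auto
  then obtain r where r: "circ (q * x) r = 0"
    unfolding Qset_def by blast
  have fixes_qn: "gpow q n * (q * x) = gpow q n"
    using n qx gpow_Suc_right[of n q] by (simp add: mult.assoc)
  have "0 = gpow q n * circ (q * x) r"
    using r by simp
  also have "\<dots> = gpow q n * (q * x) + gpow q n * r - gpow q n * (q * x) * r"
    by (simp add: circ_def distrib_left right_diff_distrib mult.assoc)
  also have "\<dots> = gpow q n"
    using fixes_qn by simp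
  finally show ?thesis
    unfolding nil_set_def using n by auto
qed

lemma strongly_pi_regular_idempotent:
  fixes a x :: "'a::ring"
  assumes n: "n \<ge> 1" and xa: "x * a = a * x" and ax: "gpow a n = gpow a (Suc n) * x"
  defines "p \<equiv> gpow a n * gpow x n"
  shows "p * p = p" and "p \<in> comm2 a" and "gpow a n * p = gpow a n" and "p * (a * x) = p"
proof -
  define b c where "b = gpow a n" and "c = gpow x n"
  have p: "p = b * c"
    unfolding p_def b_def c_def ..
  have bu: "b * (a * x) = b"
    using ax gpow_Suc_right[OF n, of a] unfolding b_def by (simp add: mult.assoc)
  have bp: "b * p = b"
    using mult_gpow_fixed[OF bu n] gpow_mult_commute[OF xa] unfolding p b_def c_def by simp
  have "x * b = b * x"
    unfolding b_def using gpow_commute[OF xa] by simp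
  then have cb: "c * b = b * c"
    unfolding c_def using gpow_commute by metis
  have pb: "p * b = b"
    using bp cb unfolding p by (metis mult.assoc)
  show "p * p = p"
    using pb unfolding p by (metis mult.assoc)
  show "gpow a n * p = gpow a n"
    using bp unfolding b_def .
  show "p * (a * x) = p"
    using bu cb unfolding p by (metis mult.assoc)
  show "p \<in> comm2 a"
    unfolding comm2_def comm_def
  proof (intro CollectI ballI)
    fix y
    assume "y \<in> {x. x * a = a * x}"
    then have yb: "y * b = b * y"
      unfolding b_def using gpow_commute by simp
    \<comment> \<open>both sides equal \<open>pyp\<close>, using \<open>b = bp = pb\<close>\<close>
    have "p * y = c * (y * b)"
      using cb yb unfolding p by (metis mult.assoc)
    also have "\<dots> = c * (y * (b * p))"
      using bp by simp
    also have "\<dots> = p * y * p"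
      using cb yb unfolding p by (metis mult.assoc)
    finally have left: "p * y = p * y * p" .
    have "y * p = b * y * c"
      using yb unfolding p by (metis mult.assoc)
    also have "\<dots> = (p * b) * y * c"
      using pb by simp
    also have "\<dots> = p * y * p"
      using cb yb unfolding p by (metis mult.assoc)
    finally show "p * y = y * p"
      using left by simp
  qed
qed

lemma quasipolarI_nilpotent:
  fixes a p x :: "'a::ring"
  assumes pp: "p * p = p" and pc: "p \<in> comm2 a" and xa: "x * a = a * x"
    and pax: "p * (a * x) = p" and nil: "a - a * p \<in> nil_set"
  shows "quasipolar a"
proof -
  have pa: "p * a = a * p"
    using pc unfolding comm2_def comm_def by simp
  have px: "p * x = x * p"
    using pc xa unfolding comm2_def comm_def by simp
  define d where "d = p * x"
  have ad: "a * d = p" and da: "d * a = p" and pd: "p * d = d" and dp: "d * p = d"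
    unfolding d_def using pa pax xa pp px by (metis mult.assoc)+
  have "circ (p + d) (a * p + p) = 0" "circ (a * p + p) (p + d) = 0"
    using pa pp ad da pd dp by (simp_all add: circ_def algebra_simps) (metis mult.assoc)+
  then have ap_p: "a * p + p \<in> Qset"
    unfolding Qset_def by blast
  obtain n where n: "n \<ge> 1" and N: "gpow (a - a * p) n = 0"
    using nil unfolding nil_set_def by blast
  have "(a * p + p) * (a - a * p) = 0"
    using pa pp by (simp add: algebra_simps) (metis mult.assoc)
  then have "circ (a * p + p) (a - a * p) = a + p"
    unfolding circ_def by simp
  then have "a + p \<in> Qset"
    using Qset_circ_closed[OF ap_p nilpotent_in_Qset[OF n N]] by simp
  then show ?thesis
    unfolding quasipolar_def using pp pc nilpotent_in_QN[OF n N] by blast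
qed

lemma strongly_pi_regular_imp_quasipolar:
  assumes "strongly_pi_regular a"
  shows "quasipolar a"
proof -
  obtain n x where n: "n \<ge> 1" and xa: "x * a = a * x" and ax: "gpow a n = gpow a (Suc n) * x"
    using assms unfolding strongly_pi_regular_def by blast
  define p where "p = gpow a n * gpow x n"
  note idem = strongly_pi_regular_idempotent[OF n xa ax, folded p_def]
  have pa: "p * a = a * p"
    using idem(2) unfolding comm2_def comm_def by simp
  have "gpow (a - a * p) n = 0"
    using gpow_diff_mult_idem[OF idem(1) pa n] idem(3) by simp
  then have "a - a * p \<in> nil_set"
    unfolding nil_set_def using n by blast
  then show ?thesis
    using quasipolarI_nilpotent idem xa by blast
qed

lemma quasipolar_imp_strongly_pi_regular:
  fixes a :: "'a::ring"
  assumes qp: "quasipolar a" and QN_nil: "(QN :: 'a set) \<subseteq> nil_set"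
  shows "strongly_pi_regular a"
proof -
  obtain p where pp: "p * p = p" and pc: "p \<in> comm2 a" and apQ: "a + p \<in> Qset"
    and N: "a - a * p \<in> QN"
    using qp unfolding quasipolar_def by blast
  obtain m where m: "m \<ge> 1" and Nm: "gpow (a - a * p) m = 0"
    using N QN_nil unfolding nil_set_def by blast
  have pa: "p * a = a * p"
    using pc unfolding comm2_def comm_def by simp
  obtain r where r1: "circ r (a + p) = 0" and r2: "circ (a + p) r = 0"
    using apQ unfolding Qset_def by blast
  have "(a + p) * a = a * (a + p)" and "(a + p) * p = p * (a + p)"
    using pa by (simp_all add: distrib_left distrib_right)
  then have ra: "r * a = a * r" and rp: "r * p = p * r"
    using quasi_inverse_commute[OF r1 r2] by auto
  have "a * (r * p) + p * (r * p) = ((a + p) * r) * p"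
    by (simp add: distrib_right mult.assoc)
  also have "\<dots> = (a + p + r) * p"
    using circ_eq_0_imp_mult[OF r2] by simp
  also have "\<dots> = a * p + p + r * p"
    using pp by (simp add: distrib_right)
  finally have arp: "a * (r * p) = a * p + p"
    using rp pp by (metis add_right_cancel mult.assoc)
  define x where "x = r * p - p"
  have ax: "a * x = p"
    unfolding x_def using arp by (simp add: right_diff_distrib)
  have "x * a = r * (a * p) - a * p"
    unfolding x_def using pa by (simp add: left_diff_distrib mult.assoc)
  also have "\<dots> = a * x"
    unfolding x_def using ra by (simp add: right_diff_distrib mult.assoc[symmetric])
  finally have xa: "x * a = a * x" .
  have "gpow a m = gpow a m * (a * x)"
    using gpow_diff_mult_idem[OF pp pa m] Nm ax by simp
  also have "\<dots> = gpow a (Suc m) * x"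
    using gpow_Suc_right[OF m, of a] by (simp add: mult.assoc)
  finally show ?thesis
    unfolding strongly_pi_regular_def using m xa by blast
qed

theorem proposition2p21:
  shows "(\<forall>a::'a::ring. strongly_pi_regular a) \<longleftrightarrow>
         ((\<forall>a::'a. quasipolar a) \<and> (QN :: 'a set) \<subseteq> nil_set)"
proof
  assume "\<forall>a::'a. strongly_pi_regular a"
  then show "(\<forall>a::'a. quasipolar a) \<and> (QN :: 'a set) \<subseteq> nil_set"
    using strongly_pi_regular_imp_quasipolar strongly_pi_regular_QN_imp_nil by blast
next
  assume "(\<forall>a::'a. quasipolar a) \<and> (QN :: 'a set) \<subseteq> nil_set"
  then show "\<forall>a::'a. strongly_pi_regular a"
    using quasipolar_imp_strongly_pi_regular by blast
qed

end
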